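(* Under the setting below, $G_{15}$ is plane (no two of its edges properly cross).
   Context: Setting: $V$ is a finite set of points (vertices) in the plane and $S$ a finite set of simple polygonal obstacles, pairwise non-intersecting, all of whose corners lie in $V$; each vertex is a corner of at most one obstacle and occurs at most once on its boundary. General position: no three vertices collinear and no two vertices on a line parallel to a cone boundary ray. Points $p,q$ are visible if segment $pq$ does not properly intersect any obstacle (touching at vertices or running along boundaries is allowed, meeting an obstacle interior is not). Cones: around each vertex $u$ the plane is partitioned into six cones of angle $\pi/3$ with apex $u$; $C_0^u$ has the upward vertical bisector, and counterclockwise the cones are $C_0^u,\overline{C_2^u},C_1^u,\overline{C_0^u},C_2^u,\overline{C_1^u}$ (positive cones $C_i$, negative cones $\overline{C_i}$). If the obstacle having $u$ as a corner splits a cone so that there are vertices visible from $u$ on both sides of the obstacle within it, the cone is regarded as two subcones; otherwise a single subcone. $G_\infty$: for every vertex $u$ and every positive subcone of $u$, add an edge from $u$ to the vertex visible from $u$ in that subcone whose orthogonal projection onto the cone's bisector is closest to $u$. $G_{15}$ is obtained from $G_\infty$ by, for every vertex $u$ and every negative subcone of $u$, deleting all edges of $G_\infty$ incident to $u$ in that subcone except the leftmost (clockwise extreme as seen from $u$), the rightmost (counterclockwise extreme), and the one to the closest vertex (smallest projection onto the cone's bisector). *)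

theory Defs
  imports "HOL-Analysis.Analysis"
begin

type_synonym pt = "real \<times> real"

definition cross :: "pt \<Rightarrow> pt \<Rightarrow> real" where
  "cross a b = fst a * snd b - snd a * fst b"

definition dot :: "pt \<Rightarrow> pt \<Rightarrow> real" where
  "dot a b = fst a * fst b + snd a * snd b"

definition poly_edge :: "pt list \<Rightarrow> nat \<Rightarrow> pt set" where
  "poly_edge P i = closed_segment (P ! i) (P ! (Suc i mod length P))"

definition poly_boundary :: "pt list \<Rightarrow> pt set" where
  "poly_boundary P = (\<Union>i<length P. poly_edge P i)"

definition poly_interior :: "pt list \<Rightarrow> pt set" where
  "poly_interior P = inside (poly_boundary P)"

definition simple_polygon :: "pt list \<Rightarrow> bool" where
  "simple_polygon P \<longleftrightarrow> length P \<ge> 3 \<and> distinct P \<and>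
     (\<forall>i<length P. \<forall>j<length P. i \<noteq> j \<longrightarrow>
        (if Suc i mod length P = j then poly_edge P i \<inter> poly_edge P j = {P ! j}
         else if Suc j mod length P = i then poly_edge P i \<inter> poly_edge P j = {P ! i}
         else poly_edge P i \<inter> poly_edge P j = {}))"

text \<open>V finite vertex set, S finite set of pairwise non-intersecting simple polygons
  with corners in V; each vertex occurs at most once on a boundary (distinct) and is a
  corner of at most one obstacle (implied by disjointness).\<close>
definition obstacle_setting :: "pt set \<Rightarrow> pt list set \<Rightarrow> bool" where
  "obstacle_setting V S \<longleftrightarrow> finite V \<and> finite S \<and>
     (\<forall>Ob\<in>S. simple_polygon Ob \<and> set Ob \<subseteq> V) \<and>
     (\<forall>O1\<in>S. \<forall>O2\<in>S. O1 \<noteq> O2 \<longrightarrow>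
        (poly_boundary O1 \<union> poly_interior O1) \<inter> (poly_boundary O2 \<union> poly_interior O2) = {})"

text \<open>Cone boundary rays have directions at angles j*pi/3; lines parallel to them have
  directions at angles 0, pi/3, 2pi/3.\<close>
definition general_position :: "pt set \<Rightarrow> bool" where
  "general_position V \<longleftrightarrow>
     (\<forall>p\<in>V. \<forall>q\<in>V. \<forall>r\<in>V. p \<noteq> q \<and> q \<noteq> r \<and> p \<noteq> r \<longrightarrow> cross (q - p) (r - p) \<noteq> 0) \<and>
     (\<forall>p\<in>V. \<forall>q\<in>V. p \<noteq> q \<longrightarrow>
        (\<forall>j\<in>{0,1,2::nat}. cross (q - p) (cos (real j * pi / 3), sin (real j * pi / 3)) \<noteq> 0))"

definition visible :: "pt list set \<Rightarrow> pt \<Rightarrow> pt \<Rightarrow> bool" where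
  "visible S p q \<longleftrightarrow> (\<forall>Ob\<in>S. closed_segment p q \<inter> poly_interior Ob = {})"

text \<open>Cone k (k < 6) has bisector at angle pi/2 + k*pi/3. In counterclockwise order:
  k=0: C_0, k=1: neg C_2, k=2: C_1, k=3: neg C_0, k=4: C_2, k=5: neg C_1.
  Positive cones: even k; negative cones: odd k.\<close>
definition cone_dir :: "nat \<Rightarrow> pt" where
  "cone_dir k = (cos (pi / 2 + real k * pi / 3), sin (pi / 2 + real k * pi / 3))"

definition in_cone :: "nat \<Rightarrow> pt \<Rightarrow> pt \<Rightarrow> bool" where
  "in_cone k u v \<longleftrightarrow> v \<noteq> u \<and> dot (v - u) (cone_dir k) \<ge> norm (v - u) * cos (pi / 6)"

definition proj :: "nat \<Rightarrow> pt \<Rightarrow> pt \<Rightarrow> real" where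
  "proj k u v = dot (v - u) (cone_dir k)"

definition enters_obstacle :: "pt list \<Rightarrow> pt \<Rightarrow> pt \<Rightarrow> bool" where
  "enters_obstacle Ob u d \<longleftrightarrow> (\<exists>\<epsilon>>0. \<forall>t. 0 < t \<and> t < \<epsilon> \<longrightarrow> u + t *\<^sub>R d \<in> poly_interior Ob)"

text \<open>Two points v, w of the same cone of u lie in the same subcone iff the obstacle
  having u as a corner does not separate them, i.e. no direction strictly between
  v - u and w - u enters that obstacle.\<close>
definition same_subcone :: "pt list set \<Rightarrow> pt \<Rightarrow> pt \<Rightarrow> pt \<Rightarrow> bool" where
  "same_subcone S u v w \<longleftrightarrow>
     (\<forall>Ob\<in>S. u \<in> set Ob \<longrightarrow> (\<forall>d\<in>open_segment (v - u) (w - u). \<not> enters_obstacle Ob u d))"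

definition Ginf_edge :: "pt set \<Rightarrow> pt list set \<Rightarrow> pt \<Rightarrow> pt \<Rightarrow> bool" where
  "Ginf_edge V S u v \<longleftrightarrow> u \<in> V \<and> v \<in> V \<and>
     (\<exists>k<6. even k \<and> in_cone k u v \<and> visible S u v \<and>
        (\<forall>w\<in>V. in_cone k u w \<and> visible S u w \<and> same_subcone S u v w \<longrightarrow> proj k u v \<le> proj k u w))"

definition Ginf :: "pt set \<Rightarrow> pt list set \<Rightarrow> pt set set" where
  "Ginf V S = {{u, v} | u v. Ginf_edge V S u v}"

text \<open>Edge {x,y} of G_inf survives the pruning at x: if y lies in a negative cone of x,
  then among the G_inf-neighbours of x in the same subcone, y is the clockwise extreme,
  the counterclockwise extreme, or the closest one.\<close>
definition kept_at :: "pt set \<Rightarrow> pt list set \<Rightarrow> pt \<Rightarrow> pt \<Rightarrow> bool" where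
  "kept_at V S x y \<longleftrightarrow> (\<forall>k<6. odd k \<and> in_cone k x y \<longrightarrow>
     (let N = {z\<in>V. {x, z} \<in> Ginf V S \<and> in_cone k x z \<and> same_subcone S x y z} in
        (\<forall>z\<in>N. z \<noteq> y \<longrightarrow> cross (y - x) (z - x) > 0) \<or>
        (\<forall>z\<in>N. z \<noteq> y \<longrightarrow> cross (z - x) (y - x) > 0) \<or>
        (\<forall>z\<in>N. proj k x y \<le> proj k x z)))"

definition G15 :: "pt set \<Rightarrow> pt list set \<Rightarrow> pt set set" where
  "G15 V S = {e \<in> Ginf V S. \<forall>x y. e = {x, y} \<longrightarrow> kept_at V S x y}"

definition plane :: "pt set set \<Rightarrow> bool" where
  "plane E \<longleftrightarrow> (\<forall>a b c d. {a, b} \<in> E \<and> {c, d} \<in> E \<and> {a, b} \<noteq> {c, d} \<longrightarrow>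
      open_segment a b \<inter> open_segment c d = {})"

end

(* G15 is a subgraph of G_inf, so it suffices that G_inf is plane.  Suppose the G_inf edges uv and
   xy cross at p.  Comparing the projections of the four endpoints onto the three positive cone
   bisectors, one endpoint, say z, lies in the canonical triangle of the other edge, say uv, where
   v was chosen from u as the closest visible vertex of its subcone.  Among the vertices in the
   triangle u p z other than u, let w be the one whose direction from u is angularly closest to uv.
   The open triangle spanned by u, p and the point where ray uw meets line pz contains no vertex;
   an obstacle entering it would have to cross the visible segment uv or zz' transversally at a
   non-corner point (or have p on its boundary), which is impossible.  So w is visible from u,
   lies in the same subcone as v and is strictly closer to u than v: a contradiction. *)

theory Submission
  imports Defs
begin

section \<open>Polygon boundaries are Jordan curves\<close>

fun polygonal_path :: "'a::real_normed_vector list \<Rightarrow> real \<Rightarrow> 'a" where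
  "polygonal_path (a # b # c # rest) = linepath a b +++ polygonal_path (b # c # rest)"
| "polygonal_path [a, b] = linepath a b"
| "polygonal_path _ = linepath 0 0"

lemma pathstart_polygonal_path: "length L \<ge> 2 \<Longrightarrow> pathstart (polygonal_path L) = L ! 0"
  by (cases L rule: polygonal_path.cases) auto

lemma pathfinish_polygonal_path: "length L \<ge> 2 \<Longrightarrow> pathfinish (polygonal_path L) = last L"
  by (induction L rule: polygonal_path.induct) auto

lemma path_image_polygonal_path:
  "length L \<ge> 2 \<Longrightarrow>
    path_image (polygonal_path L) = (\<Union>i<length L - 1. closed_segment (L!i) (L!Suc i))"
proof (induction L rule: polygonal_path.induct)
  case (1 a b c rest)
  have "{..<length (a # b # c # rest) - 1} = insert 0 (Suc ` {..<length (b # c # rest) - 1})"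
    by (simp add: lessThan_Suc_eq_insert_0)
  with 1 show ?case
    by (simp add: path_image_join pathstart_polygonal_path)
qed auto

definition simple_chain :: "'a::real_normed_vector list \<Rightarrow> bool" where
  "simple_chain L \<longleftrightarrow> length L \<ge> 2 \<and> distinct L \<and>
     (\<forall>i j. i < j \<and> Suc j < length L \<longrightarrow>
        closed_segment (L!i) (L!Suc i) \<inter> closed_segment (L!j) (L!Suc j)
          \<subseteq> (if j = Suc i then {L!j} else {}))"

lemma simple_chain_Cons:
  assumes "simple_chain (a # b # c # rest)"
  shows "simple_chain (b # c # rest)"
proof -
  let ?L = "a # b # c # rest" and ?R = "b # c # rest"
  have "closed_segment (?R!i) (?R!Suc i) \<inter> closed_segment (?R!j) (?R!Suc j)
      \<subseteq> (if j = Suc i then {?R!j} else {})" if "i < j \<and> Suc j < length ?R" for i j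
  proof -
    have "Suc i < Suc j \<and> Suc (Suc j) < length ?L" using that by simp
    then have "closed_segment (?L!Suc i) (?L!Suc (Suc i)) \<inter> closed_segment (?L!Suc j) (?L!Suc (Suc j))
        \<subseteq> (if Suc j = Suc (Suc i) then {?L!Suc j} else {})"
      using assms unfolding simple_chain_def by blast
    then show ?thesis unfolding nth_Cons_Suc nat.inject .
  qed
  moreover have "distinct ?L" using assms unfolding simple_chain_def by blast
  ultimately show ?thesis unfolding simple_chain_def by simp
qed

lemma arc_polygonal_path: "simple_chain L \<Longrightarrow> arc (polygonal_path L)"
proof (induction L rule: polygonal_path.induct)
  case (1 a b c rest)
  let ?L = "a # b # c # rest" and ?R = "b # c # rest"
  have "closed_segment a b \<inter> closed_segment (?R!i) (?R!Suc i) \<subseteq> {b}"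
    if "i < length ?R - 1" for i
  proof -
    have "0 < Suc i \<and> Suc (Suc i) < length ?L" using that by simp
    with "1.prems" have "closed_segment (?L!0) (?L!Suc 0) \<inter> closed_segment (?L!Suc i) (?L!Suc (Suc i))
        \<subseteq> (if Suc i = Suc 0 then {?L!Suc i} else {})"
      unfolding simple_chain_def by blast
    then show ?thesis by (auto split: if_splits)
  qed
  then have "path_image (linepath a b) \<inter> path_image (polygonal_path ?R) \<subseteq> {b}"
    by (auto simp: path_image_polygonal_path)
  moreover have "distinct ?L" using "1.prems" unfolding simple_chain_def by blast
  then have "a \<noteq> b" by auto
  moreover have "arc (polygonal_path ?R)" using 1 simple_chain_Cons by blast
  ultimately show ?case
    by (simp only: polygonal_path.simps) (intro arc_join; simp add: pathstart_polygonal_path)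
next
  case (2 a b)
  then have "distinct [a, b]" unfolding simple_chain_def by blast
  then show ?case by simp
qed (simp_all add: simple_chain_def)

lemma poly_edge_rotate1:
  assumes "i < length P - 1"
  shows "closed_segment (rotate1 P ! i) (rotate1 P ! Suc i) = poly_edge P (Suc i)"
  using assms by (simp add: nth_rotate1 poly_edge_def)

lemma simple_chain_rotate1:
  assumes P: "simple_polygon P"
  shows "simple_chain (rotate1 P)"
  unfolding simple_chain_def
proof (intro conjI allI impI)
  have "length P \<ge> 3" "distinct P" using P unfolding simple_polygon_def by blast+
  then show "2 \<le> length (rotate1 P)" "distinct (rotate1 P)" by simp_all
  fix i j assume ij: "i < j \<and> Suc j < length (rotate1 P)"
  define n where "n = length P"
  have "Suc i < n" "Suc j < n" "Suc i \<noteq> Suc j" using ij by (auto simp: n_def)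
  then have edges: "if Suc (Suc i) mod n = Suc j then poly_edge P (Suc i) \<inter> poly_edge P (Suc j) = {P ! Suc j}
      else if Suc (Suc j) mod n = Suc i then poly_edge P (Suc i) \<inter> poly_edge P (Suc j) = {P ! Suc i}
      else poly_edge P (Suc i) \<inter> poly_edge P (Suc j) = {}"
    using P unfolding simple_polygon_def n_def by blast
  have mods: "Suc (Suc i) mod n = Suc j \<longleftrightarrow> Suc i = j" "Suc (Suc j) mod n \<noteq> Suc i"
    using ij by (simp_all add: n_def mod_Suc)
  have "poly_edge P (Suc i) \<inter> poly_edge P (Suc j) \<subseteq> (if j = Suc i then {P ! Suc j} else {})"
    using edges mods by (cases "Suc i = j") simp_all
  moreover have "closed_segment (rotate1 P ! i) (rotate1 P ! Suc i) = poly_edge P (Suc i)"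
    "closed_segment (rotate1 P ! j) (rotate1 P ! Suc j) = poly_edge P (Suc j)"
    using ij by (intro poly_edge_rotate1; simp)+
  moreover have "rotate1 P ! j = P ! Suc j" using ij by (simp add: nth_rotate1)
  ultimately show "closed_segment (rotate1 P ! i) (rotate1 P ! Suc i) \<inter>
      closed_segment (rotate1 P ! j) (rotate1 P ! Suc j) \<subseteq> (if j = Suc i then {rotate1 P ! j} else {})"
    by (simp only:)
qed

lemma poly_edge_Int_subset:
  assumes "simple_polygon P" "i < length P" "j < length P" "i \<noteq> j"
  shows "poly_edge P i \<inter> poly_edge P j \<subseteq> {P ! i, P ! (Suc i mod length P)}"
  using assms unfolding simple_polygon_def by (auto split: if_splits)

lemma closed_poly_boundary: "closed (poly_boundary P)"
  unfolding poly_boundary_def poly_edge_def by (intro closed_UN) auto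

lemma open_poly_interior: "open (poly_interior P)"
  unfolding poly_interior_def by (simp add: open_inside closed_poly_boundary)

lemma simple_polygon_boundary_loop:
  assumes P: "simple_polygon P"
  obtains g where "simple_path g" "pathfinish g = pathstart g" "path_image g = poly_boundary P"
proof
  define n where "n = length P"
  have n: "n \<ge> 3" and "distinct P" using P unfolding simple_polygon_def n_def by blast+
  moreover have len: "0 < length P" "1 < length P" using n unfolding n_def by linarith+
  ultimately have "P ! 0 \<noteq> P ! 1" using nth_eq_iff_index_eq[of P 0 1] by simp
  have "P \<noteq> []" using len by auto
  define chain where "chain = polygonal_path (rotate1 P)"
  have start: "pathstart chain = P ! 1"
    using n len by (simp add: chain_def n_def pathstart_polygonal_path nth_rotate1)
  have finish: "pathfinish chain = P ! 0"
    using n \<open>P \<noteq> []\<close> by (simp add: chain_def n_def pathfinish_polygonal_path rotate1_hd_tl hd_conv_nth)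
  have chain_image: "path_image chain = (\<Union>i<n - 1. poly_edge P (Suc i))"
    using n by (simp add: chain_def n_def path_image_polygonal_path poly_edge_rotate1)
  have "{..<n} = insert 0 (Suc ` {..<n - 1})"
    using n lessThan_Suc_eq_insert_0[of "n - 1"] by simp
  then have boundary: "poly_boundary P = closed_segment (P ! 0) (P ! 1) \<union> path_image chain"
    using len by (simp add: poly_boundary_def chain_image n_def poly_edge_def)
  let ?g = "linepath (P ! 0) (P ! 1) +++ chain"
  show "simple_path ?g"
  proof (rule simple_path_join_loop)
    show "arc (linepath (P ! 0) (P ! 1))" using \<open>P ! 0 \<noteq> P ! 1\<close> by simp
    show "arc chain" unfolding chain_def using P by (intro arc_polygonal_path simple_chain_rotate1)
    have "poly_edge P 0 \<inter> poly_edge P (Suc i) \<subseteq> {P ! 0, P ! 1}" if "i < n - 1" for i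
      using poly_edge_Int_subset[OF P, of 0 "Suc i"] that len by (simp add: n_def)
    moreover have "poly_edge P 0 = closed_segment (P ! 0) (P ! 1)"
      using len by (simp add: poly_edge_def)
    ultimately show "path_image (linepath (P ! 0) (P ! 1)) \<inter> path_image chain
        \<subseteq> {pathstart (linepath (P ! 0) (P ! 1)), pathstart chain}"
      unfolding chain_image start by force
  qed (simp_all add: start finish)
  show "pathfinish ?g = pathstart ?g" by (simp add: finish)
  show "path_image ?g = poly_boundary P" by (simp add: path_image_join start boundary)
qed

lemma simple_loop_image_subset_closure_inside:
  fixes g :: "real \<Rightarrow> 'a::euclidean_space"
  assumes "simple_path g" "pathfinish g = pathstart g" "DIM('a) = 2"
  shows "path_image g \<subseteq> closure (inside (path_image g))"
proof -
  let ?B = "path_image g"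
  have "?B homeomorphic sphere (0::complex) 1"
    using assms by (intro homeomorphic_simple_path_image_circle) auto
  also have "\<dots> homeomorphic sphere (0::'a) 1"
    using assms by (intro homeomorphic_spheres_gen) auto
  finally have sphere: "?B homeomorphic sphere (0::'a) 1" .
  then have "\<not> connected (- ?B)" by (rule Jordan_Brouwer_separation) simp
  moreover have "bounded (- (- ?B))"
    using assms by (simp add: bounded_simple_path_image)
  ultimately obtain C where C: "C \<in> components (- ?B)" "bounded C"
    using cobounded_has_bounded_component assms(3) by (metis order_refl)
  have "C \<subseteq> inside ?B"
    using C by (auto simp: inside_def components_iff connected_component_eq dest: connected_component_in)
  moreover have "frontier C = ?B"
    using sphere C assms(3) by (intro Jordan_Brouwer_frontier) auto
  ultimately show ?thesis
    by (metis Diff_subset closure_mono frontier_def order_trans)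
qed

lemma connected_subset_inside:
  assumes "connected H" "H \<inter> S = {}" "q \<in> H" "q \<in> inside S"
  shows "H \<subseteq> inside S"
proof
  fix x assume "x \<in> H"
  with assms(1-3) have "connected_component (- S) q x" by (intro connected_componentI[of H]) auto
  with assms(4) show "x \<in> inside S" using inside_same_component by blast
qed

lemma poly_boundary_subset_closure_interior:
  assumes "simple_polygon P"
  shows "poly_boundary P \<subseteq> closure (poly_interior P)"
proof -
  obtain g where "simple_path g" "pathfinish g = pathstart g" "path_image g = poly_boundary P"
    using simple_polygon_boundary_loop[OF assms] .
  then show ?thesis
    unfolding poly_interior_def by (metis simple_loop_image_subset_closure_inside DIM_prod DIM_real one_add_one)
qed

lemma cross_eq_inner: "cross d (x - c) = (- snd d, fst d) \<bullet> (x - c)"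
  by (simp add: cross_def inner_prod_def algebra_simps)

lemma cross_scaleR: "cross (t *\<^sub>R a) b = t * cross a b" "cross a (t *\<^sub>R b) = t * cross a b"
  by (simp_all add: cross_def algebra_simps)

lemma cross_self: "cross a a = 0"
  by (simp add: cross_def)

lemma cross_closed_segment:
  assumes "x \<in> closed_segment c1 c2"
  shows "cross (c2 - c1) (x - c1) = 0"
proof -
  obtain u where x: "x = (1 - u) *\<^sub>R c1 + u *\<^sub>R c2" using assms in_segment(1) by blast
  show ?thesis unfolding x by (simp add: cross_def algebra_simps)
qed

lemma closed_segment_diff_parallel:
  assumes "x \<in> closed_segment c1 c2" "y \<in> closed_segment c1 c2"
  obtains s where "x - y = s *\<^sub>R (c2 - c1)"
proof -
  obtain a b where x: "x = (1 - a) *\<^sub>R c1 + a *\<^sub>R c2" and y: "y = (1 - b) *\<^sub>R c1 + b *\<^sub>R c2"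
    using assms in_segment(1) by metis
  have "x - y = (a - b) *\<^sub>R (c2 - c1)" unfolding x y by (simp add: algebra_simps)
  then show ?thesis using that by blast
qed

lemma cross_cramer:
  assumes "cross a b \<noteq> 0"
  shows "y = (cross y b / cross a b) *\<^sub>R a + (cross a y / cross a b) *\<^sub>R b"
proof -
  have "cross a b *\<^sub>R y = cross y b *\<^sub>R a + cross a y *\<^sub>R b"
    by (simp add: cross_def prod_eq_iff algebra_simps)
  then have "(1 / cross a b) *\<^sub>R (cross a b *\<^sub>R y) =
      (1 / cross a b) *\<^sub>R (cross y b *\<^sub>R a + cross a y *\<^sub>R b)"
    by simp
  with assms show ?thesis by (simp add: scaleR_add_right)
qed

lemma cross_parallel_trans:
  assumes "d \<noteq> 0" "cross d a = 0" "cross d b = 0"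
  shows "cross a b = 0"
proof -
  have "cross a b * fst d = fst a * cross d b - fst b * cross d a"
    "cross a b * snd d = snd a * cross d b - snd b * cross d a"
    by (simp_all add: cross_def algebra_simps)
  with assms show ?thesis by (auto simp: prod_eq_iff)
qed

lemma convex_cross_halfplane: "convex {x. s * cross d (x - c) > 0}"
proof -
  let ?n = "s *\<^sub>R (- snd d, fst d)"
  have "{x. s * cross d (x - c) > 0} = {x. ?n \<bullet> x > ?n \<bullet> c}"
    by (auto simp: cross_def inner_prod_def algebra_simps)
  then show ?thesis by (simp add: convex_halfspace_gt)
qed

lemma open_not_subset_line:
  assumes "open U" "U \<noteq> {}" "d \<noteq> 0"
  obtains x where "x \<in> U" "cross d (x - c) \<noteq> 0"
proof -
  let ?n = "(- snd d, fst d)"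
  have "?n \<noteq> 0" using assms(3) by (auto simp: prod_eq_iff)
  have "\<not> U \<subseteq> {x. ?n \<bullet> x = ?n \<bullet> c}"
  proof
    assume "U \<subseteq> {x. ?n \<bullet> x = ?n \<bullet> c}"
    then have "U \<subseteq> interior {x. ?n \<bullet> x = ?n \<bullet> c}" using assms(1) by (rule interior_maximal)
    with \<open>?n \<noteq> 0\<close> assms(2) show False by simp
  qed
  then show ?thesis using that by (auto simp: cross_eq_inner inner_diff_right)
qed

section \<open>Segments crossing an obstacle edge\<close>

lemma poly_edge_ends_in_set:
  assumes "i < length P"
  shows "{P ! i, P ! (Suc i mod length P)} \<subseteq> set P"
proof -
  have "0 < length P" using assms by linarith
  then show ?thesis using assms by simp
qed

lemma poly_edge_nondegenerate:
  assumes "simple_polygon P" "i < length P"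
  shows "P ! (Suc i mod length P) \<noteq> P ! i"
proof -
  have "distinct P" "length P \<ge> 3" using assms(1) unfolding simple_polygon_def by blast+
  moreover from this have "Suc i mod length P \<noteq> i"
    using assms(2) by (cases "Suc i = length P") (simp_all add: mod_Suc)
  moreover have "Suc i mod length P < length P" using assms(2) by (intro mod_less_divisor) linarith
  ultimately show ?thesis using assms(2) nth_eq_iff_index_eq[of P "Suc i mod length P" i] by simp
qed

lemma poly_edge_point_isolated:
  assumes P: "simple_polygon P" and i: "i < length P" and e: "e \<in> poly_edge P i" "e \<notin> set P"
  obtains \<delta> where "\<delta> > 0" "ball e \<delta> \<inter> poly_boundary P \<subseteq> poly_edge P i"
proof -
  define F where "F = (\<Union>j\<in>{j. j < length P \<and> j \<noteq> i}. poly_edge P j)"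
  have "e \<notin> F"
  proof
    assume "e \<in> F"
    then obtain j where "j < length P" "j \<noteq> i" "e \<in> poly_edge P j" unfolding F_def by blast
    with poly_edge_Int_subset[OF P i] e have "e \<in> {P ! i, P ! (Suc i mod length P)}" by blast
    with e(2) poly_edge_ends_in_set[OF i] show False by blast
  qed
  moreover have "closed F" unfolding F_def poly_edge_def by (intro closed_UN) auto
  ultimately obtain \<delta> where "\<delta> > 0" "ball e \<delta> \<subseteq> - F"
    using open_contains_ball[of "- F"] by (auto simp: open_Compl)
  moreover have "poly_boundary P \<subseteq> poly_edge P i \<union> F" by (auto simp: poly_boundary_def F_def)
  ultimately show ?thesis using that by blast
qed

lemma poly_edge_half_disc_subset_interior:
  assumes P: "simple_polygon P" and i: "i < length P" and e: "e \<in> poly_edge P i" "e \<notin> set P"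
  defines "c \<equiv> P ! i" and "d \<equiv> P ! (Suc i mod length P) - P ! i"
  obtains \<delta> s where "\<delta> > 0" "s \<noteq> 0"
    "ball e \<delta> \<inter> {x. s * cross d (x - c) > 0} \<subseteq> poly_interior P"
proof -
  obtain \<delta> where \<delta>: "\<delta> > 0" "ball e \<delta> \<inter> poly_boundary P \<subseteq> poly_edge P i"
    using poly_edge_point_isolated[OF assms(1-4)] .
  have "e \<in> closure (poly_interior P)"
    using poly_boundary_subset_closure_interior[OF P] e i by (auto simp: poly_boundary_def)
  then obtain y where "y \<in> poly_interior P" "dist y e < \<delta>"
    using \<delta>(1) closure_approachable by blast
  then have "ball e \<delta> \<inter> poly_interior P \<noteq> {}" by (auto simp: dist_commute)
  moreover have "open (ball e \<delta> \<inter> poly_interior P)" by (simp add: open_Int open_poly_interior)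
  moreover have "d \<noteq> 0" using poly_edge_nondegenerate[OF P i] by (simp add: d_def)
  ultimately obtain q where q: "q \<in> ball e \<delta> \<inter> poly_interior P" "cross d (q - c) \<noteq> 0"
    using open_not_subset_line by blast
  define s where "s = sgn (cross d (q - c))"
  define H where "H = ball e \<delta> \<inter> {x. s * cross d (x - c) > 0}"
  have "x \<notin> poly_edge P i" if "s * cross d (x - c) > 0" for x
    using that cross_closed_segment[of x c "P ! (Suc i mod length P)"]
    by (auto simp: poly_edge_def c_def d_def)
  with \<delta>(2) have "H \<inter> poly_boundary P = {}" by (auto simp: H_def)
  moreover have "connected H"
    unfolding H_def by (intro convex_connected convex_Int convex_ball convex_cross_halfplane)
  moreover have "q \<in> H"
    using q by (simp add: H_def s_def) (metis abs_sgn mult.commute zero_less_abs_iff)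
  ultimately have "H \<subseteq> poly_interior P"
    using q(1) connected_subset_inside unfolding poly_interior_def by blast
  moreover have "s \<noteq> 0" using q(2) by (simp add: s_def sgn_0_0)
  ultimately show ?thesis using that \<delta>(1) by (simp add: H_def)
qed

lemma segment_crossing_poly_edge_meets_interior:
  assumes P: "simple_polygon P" and i: "i < length P" and e: "e \<in> poly_edge P i" "e \<notin> set P"
    and eab: "e \<in> open_segment a b"
    and transversal: "cross (P ! (Suc i mod length P) - P ! i) (b - a) \<noteq> 0"
  shows "closed_segment a b \<inter> poly_interior P \<noteq> {}"
proof -
  let ?c = "P ! i" and ?d = "P ! (Suc i mod length P) - P ! i"
  obtain \<delta> s where \<delta>: "\<delta> > 0" "s \<noteq> 0"
    and half_disc: "ball e \<delta> \<inter> {x. s * cross ?d (x - ?c) > 0} \<subseteq> poly_interior P"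
    using poly_edge_half_disc_subset_interior[OF P i e] by blast
  obtain u where u: "0 < u" "u < 1" "e = (1 - u) *\<^sub>R a + u *\<^sub>R b" using eab in_segment(2) by blast
  have "\<delta> / (norm (b - a) + 1) > 0"
    using \<delta>(1) norm_ge_zero[of "b - a"] by (intro divide_pos_pos) linarith+
  then obtain \<tau> where \<tau>: "0 < \<tau>" "\<tau> < min u (1 - u)" "\<tau> < \<delta> / (norm (b - a) + 1)"
    using field_lbound_gt_zero[of "min u (1 - u)" "\<delta> / (norm (b - a) + 1)"] u by auto
  define t where "t = sgn (s * cross ?d (b - a)) * \<tau>"
  define x where "x = e + t *\<^sub>R (b - a)"
  have abs_t: "\<bar>t\<bar> = \<tau>" using \<tau>(1) \<delta>(2) transversal by (simp add: t_def abs_mult sgn_mult)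
  have "cross ?d (x - ?c) = cross ?d (e - ?c) + t * cross ?d (b - a)"
    by (simp add: x_def cross_def algebra_simps)
  moreover have "cross ?d (e - ?c) = 0" using e(1) cross_closed_segment by (simp add: poly_edge_def)
  ultimately have "s * cross ?d (x - ?c) = \<bar>s * cross ?d (b - a)\<bar> * \<tau>"
    unfolding t_def abs_sgn[of "s * cross ?d (b - a)"] by (simp add: mult_ac)
  then have "s * cross ?d (x - ?c) > 0" using \<tau>(1) \<delta>(2) transversal by simp
  moreover have "dist e x < \<delta>"
  proof -
    have "dist e x = \<tau> * norm (b - a)" by (simp add: x_def dist_norm abs_t)
    also have "\<dots> < \<tau> * (norm (b - a) + 1)" using \<tau>(1) by (simp add: distrib_left)
    also have "\<dots> < \<delta>"
      using \<tau>(3) norm_ge_zero[of "b - a"] by (simp add: less_divide_eq add_nonneg_pos)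
    finally show ?thesis .
  qed
  ultimately have "x \<in> poly_interior P" using half_disc by auto
  moreover have "x \<in> closed_segment a b"
  proof -
    have "x = (1 - (u + t)) *\<^sub>R a + (u + t) *\<^sub>R b" by (simp add: x_def u(3) algebra_simps)
    moreover have "0 \<le> u + t" "u + t \<le> 1" using abs_t \<tau>(2) by linarith+
    ultimately show ?thesis unfolding in_segment(1) by blast
  qed
  ultimately show ?thesis by blast
qed

lemma visible_commute: "visible S a b \<longleftrightarrow> visible S b a"
  by (simp add: visible_def closed_segment_commute)

lemma visible_crossing_poly_edge_parallel:
  assumes "visible S a b" "Ob \<in> S" "simple_polygon Ob" "i < length Ob"
    "e \<in> poly_edge Ob i" "e \<notin> set Ob" "e \<in> open_segment a b"
  shows "cross (Ob ! (Suc i mod length Ob) - Ob ! i) (b - a) = 0"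
  using segment_crossing_poly_edge_meets_interior[of Ob i e a b] assms unfolding visible_def by blast

section \<open>Cone coordinates and canonical triangles\<close>

definition cone_coord :: "nat \<Rightarrow> pt \<Rightarrow> real" where
  "cone_coord k x = dot x (cone_dir k)"

lemma proj_eq_cone_coord: "proj k u v = cone_coord k (v - u)"
  by (simp add: proj_def cone_coord_def)

lemma cone_coord_diff: "cone_coord k (x - y) = cone_coord k x - cone_coord k y"
  and cone_coord_add: "cone_coord k (x + y) = cone_coord k x + cone_coord k y"
  and cone_coord_scaleR: "cone_coord k (t *\<^sub>R x) = t * cone_coord k x"
  by (simp_all add: cone_coord_def dot_def algebra_simps)

lemma cone_coord_0: "cone_coord 0 x = snd x"
  by (simp add: cone_coord_def dot_def cone_dir_def)

lemma cone_coord_2: "cone_coord 2 x = - (sqrt 3 / 2) * fst x - snd x / 2"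
proof -
  have "pi / 2 + real 2 * pi / 3 = pi / 6 + pi" by simp
  then have "cone_dir 2 = (- (sqrt 3 / 2), - (1 / 2))"
    unfolding cone_dir_def by (simp only: cos_periodic_pi sin_periodic_pi cos_30 sin_30)
  then show ?thesis by (simp add: cone_coord_def dot_def)
qed

lemma cone_coord_4: "cone_coord 4 x = sqrt 3 / 2 * fst x - snd x / 2"
proof -
  have "pi / 2 + real 4 * pi / 3 = - (pi / 6) + 2 * pi" by simp
  then have "cone_dir 4 = (sqrt 3 / 2, - (1 / 2))"
    unfolding cone_dir_def by (simp only: cos_periodic sin_periodic cos_minus sin_minus cos_30 sin_30)
  then show ?thesis by (simp add: cone_coord_def dot_def)
qed

lemma cone_coord_sum: "cone_coord 0 x + cone_coord 2 x + cone_coord 4 x = 0"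
  by (simp add: cone_coord_0 cone_coord_2 cone_coord_4)

lemma cone_coord_sum_squares:
  "(cone_coord 0 x)\<^sup>2 + (cone_coord 2 x)\<^sup>2 + (cone_coord 4 x)\<^sup>2 = 3 / 2 * (norm x)\<^sup>2"
proof -
  have "(norm x)\<^sup>2 = (fst x)\<^sup>2 + (snd x)\<^sup>2" by (cases x) (simp add: norm_Pair)
  then show ?thesis by (simp add: cone_coord_0 cone_coord_2 cone_coord_4 power2_eq_square algebra_simps)
qed

lemma cone_condition_iff:
  fixes a b c r :: real
  assumes sum: "a + b + c = 0" and squares: "a\<^sup>2 + b\<^sup>2 + c\<^sup>2 = 3 / 2 * r\<^sup>2" and "r \<ge> 0"
  shows "r * (sqrt 3 / 2) \<le> a \<longleftrightarrow> b \<le> 0 \<and> c \<le> 0"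
proof -
  have c: "c = - a - b" using sum by simp
  have bc: "b * c = a\<^sup>2 - 3 / 4 * r\<^sup>2"
    using squares unfolding c by (simp add: power2_eq_square algebra_simps)
  have r_sq: "(r * (sqrt 3 / 2))\<^sup>2 = 3 / 4 * r\<^sup>2" by (simp add: power_mult_distrib power_divide)
  have "r * (sqrt 3 / 2) \<le> a \<longleftrightarrow> 0 \<le> a \<and> 0 \<le> b * c"
  proof
    assume a: "r * (sqrt 3 / 2) \<le> a"
    moreover have "0 \<le> r * (sqrt 3 / 2)" using \<open>r \<ge> 0\<close> by simp
    ultimately have "(r * (sqrt 3 / 2))\<^sup>2 \<le> a\<^sup>2" by (intro power_mono)
    with a \<open>0 \<le> r * (sqrt 3 / 2)\<close> show "0 \<le> a \<and> 0 \<le> b * c" unfolding r_sq bc by simp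
  next
    assume h: "0 \<le> a \<and> 0 \<le> b * c"
    then have "(r * (sqrt 3 / 2))\<^sup>2 \<le> a\<^sup>2" unfolding r_sq using bc by simp
    with h show "r * (sqrt 3 / 2) \<le> a" using power2_le_imp_le by blast
  qed
  also have "\<dots> \<longleftrightarrow> b \<le> 0 \<and> c \<le> 0"
  proof
    assume "0 \<le> a \<and> 0 \<le> b * c"
    then show "b \<le> 0 \<and> c \<le> 0" using sum unfolding zero_le_mult_iff by linarith
  next
    assume "b \<le> 0 \<and> c \<le> 0"
    then show "0 \<le> a \<and> 0 \<le> b * c" using sum by (simp add: mult_nonpos_nonpos)
  qed
  finally show ?thesis .
qed

lemma cone_coord_ge_iff:
  assumes "k \<in> {0, 2, 4}"
  shows "norm x * (sqrt 3 / 2) \<le> cone_coord k x \<longleftrightarrow>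
    (\<forall>j\<in>{0, 2, 4}. j \<noteq> k \<longrightarrow> cone_coord j x \<le> 0)"
proof -
  have sum: "cone_coord 0 x + cone_coord 2 x + cone_coord 4 x = 0" by (rule cone_coord_sum)
  have sq: "(cone_coord 0 x)\<^sup>2 + (cone_coord 2 x)\<^sup>2 + (cone_coord 4 x)\<^sup>2 = 3 / 2 * (norm x)\<^sup>2"
    by (rule cone_coord_sum_squares)
  consider "k = 0" | "k = 2" | "k = 4" using assms by blast
  then show ?thesis
  proof cases
    case 1
    then show ?thesis using cone_condition_iff[OF sum sq] by simp
  next
    case 2
    have "cone_coord 2 x + cone_coord 0 x + cone_coord 4 x = 0"
      "(cone_coord 2 x)\<^sup>2 + (cone_coord 0 x)\<^sup>2 + (cone_coord 4 x)\<^sup>2 = 3 / 2 * (norm x)\<^sup>2"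
      using sum sq by linarith+
    with 2 show ?thesis using cone_condition_iff by simp
  next
    case 3
    have "cone_coord 4 x + cone_coord 0 x + cone_coord 2 x = 0"
      "(cone_coord 4 x)\<^sup>2 + (cone_coord 0 x)\<^sup>2 + (cone_coord 2 x)\<^sup>2 = 3 / 2 * (norm x)\<^sup>2"
      using sum sq by linarith+
    with 3 show ?thesis using cone_condition_iff by simp
  qed
qed

lemma in_cone_iff:
  assumes "k \<in> {0, 2, 4}"
  shows "in_cone k u v \<longleftrightarrow>
    v \<noteq> u \<and> (\<forall>j\<in>{0, 2, 4}. j \<noteq> k \<longrightarrow> cone_coord j (v - u) \<le> 0)"
  using cone_coord_ge_iff[OF assms, of "v - u"]
  unfolding in_cone_def cos_30 cone_coord_def by (simp add: mult.commute)

lemma general_position_cross: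
  assumes "general_position V" "p \<in> V" "q \<in> V" "r \<in> V" "p \<noteq> q" "q \<noteq> r" "p \<noteq> r"
  shows "cross (q - p) (r - p) \<noteq> 0"
  using assms unfolding general_position_def by blast

lemma general_position_cone_coord:
  assumes "general_position V" "p \<in> V" "q \<in> V" "p \<noteq> q" "k \<in> {0, 2, 4}"
  shows "cone_coord k (q - p) \<noteq> 0"
proof -
  have no_parallel: "cross (q - p) (cos (real j * pi / 3), sin (real j * pi / 3)) \<noteq> 0"
    if "j \<in> {0, 1, 2}" for j
    using assms that unfolding general_position_def by blast
  have "cos (real 2 * pi / 3) = - (1 / 2)" "sin (real 2 * pi / 3) = sqrt 3 / 2"
    using cos_pi_minus[of "pi / 3"] sin_pi_minus[of "pi / 3"] by (simp_all add: cos_60 sin_60)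
  then have "cross (q - p) (- (1 / 2), sqrt 3 / 2) \<noteq> 0"
    using no_parallel[of 2] by (simp only:) simp
  moreover have "cross (q - p) (1, 0) \<noteq> 0" "cross (q - p) (1 / 2, sqrt 3 / 2) \<noteq> 0"
    using no_parallel[of 0] no_parallel[of 1] by (simp_all add: cos_60 sin_60)
  ultimately show ?thesis
    using assms(5) by (auto simp: cone_coord_0 cone_coord_2 cone_coord_4 cross_def field_simps)
qed

text \<open>For \<open>v\<close> in the positive cone \<open>k\<close> of \<open>u\<close> this is the canonical triangle
  \<open>T_uv\<close>: the part of that cone on \<open>u\<close>'s side of the line through \<open>v\<close>
  perpendicular to the bisector.\<close>

definition canonical_triangle :: "pt \<Rightarrow> pt \<Rightarrow> pt set" where
  "canonical_triangle u v =
     {x. \<forall>j\<in>{0, 2, 4}. cone_coord j x \<le> max (cone_coord j u) (cone_coord j v)}"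

lemma left_in_canonical_triangle: "u \<in> canonical_triangle u v"
  and right_in_canonical_triangle: "v \<in> canonical_triangle u v"
  by (simp_all add: canonical_triangle_def)

lemma convex_canonical_triangle: "convex (canonical_triangle u v)"
  unfolding canonical_triangle_def convex_def
  by (auto simp: cone_coord_add cone_coord_scaleR intro!: convex_bound_le)

lemma in_cone_of_canonical_triangle:
  assumes k: "k \<in> {0, 2, 4}" and v: "in_cone k u v"
    and w: "w \<in> canonical_triangle u v" "w \<noteq> u"
  shows "in_cone k u w" "proj k u w \<le> proj k u v"
proof -
  have other: "cone_coord j v \<le> cone_coord j u" if "j \<in> {0, 2, 4}" "j \<noteq> k" for j
    using v that unfolding in_cone_iff[OF k] by (auto simp: cone_coord_diff)
  from k consider "k = 0" | "k = 2" | "k = 4" by blast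
  then have "cone_coord k u \<le> cone_coord k v"
    using cone_coord_sum[of u] cone_coord_sum[of v] other[of 0] other[of 2] other[of 4] by cases auto
  with w(1) k have "cone_coord k w \<le> cone_coord k v"
    by (auto simp: canonical_triangle_def max_def)
  moreover have "cone_coord j w \<le> cone_coord j u" if "j \<in> {0, 2, 4}" "j \<noteq> k" for j
    using w(1) other[OF that] that by (auto simp: canonical_triangle_def max_def)
  ultimately
  show "in_cone k u w" "proj k u w \<le> proj k u v"
    using w(2) by (auto simp: in_cone_iff[OF k] proj_eq_cone_coord cone_coord_diff)
qed

lemma cone_coord_closed_segment:
  assumes "p \<in> closed_segment a b"
  shows "min (cone_coord j a) (cone_coord j b) \<le> cone_coord j p"
    "cone_coord j p \<le> max (cone_coord j a) (cone_coord j b)"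
proof -
  obtain t where t: "0 \<le> t" "t \<le> 1" "p = (1 - t) *\<^sub>R a + t *\<^sub>R b"
    using assms in_segment(1) by blast
  then have "cone_coord j p = (1 - t) * cone_coord j a + t * cone_coord j b"
    by (simp add: cone_coord_add cone_coord_scaleR)
  moreover have "(1 - t) * cone_coord j a + t * cone_coord j b \<le>
      (1 - t) * max (cone_coord j a) (cone_coord j b) + t * max (cone_coord j a) (cone_coord j b)"
    "(1 - t) * min (cone_coord j a) (cone_coord j b) + t * min (cone_coord j a) (cone_coord j b) \<le>
      (1 - t) * cone_coord j a + t * cone_coord j b"
    using t(1,2) by (intro add_mono mult_left_mono; simp)+
  ultimately show "min (cone_coord j a) (cone_coord j b) \<le> cone_coord j p"
    "cone_coord j p \<le> max (cone_coord j a) (cone_coord j b)"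
    by (simp_all add: algebra_simps)
qed

lemma common_point_max_cases:
  fixes A0 A1 A2 B0 B1 B2 C0 C1 C2 D0 D1 D2 P0 P1 P2 :: real
  assumes "min A0 B0 \<le> P0" "P0 \<le> max A0 B0" "min A1 B1 \<le> P1" "P1 \<le> max A1 B1"
    "min A2 B2 \<le> P2" "P2 \<le> max A2 B2"
    "min C0 D0 \<le> P0" "P0 \<le> max C0 D0" "min C1 D1 \<le> P1" "P1 \<le> max C1 D1"
    "min C2 D2 \<le> P2" "P2 \<le> max C2 D2"
  shows "(C0 \<le> max A0 B0 \<and> C1 \<le> max A1 B1 \<and> C2 \<le> max A2 B2) \<or>
         (D0 \<le> max A0 B0 \<and> D1 \<le> max A1 B1 \<and> D2 \<le> max A2 B2) \<or>
         (A0 \<le> max C0 D0 \<and> A1 \<le> max C1 D1 \<and> A2 \<le> max C2 D2) \<or>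
         (B0 \<le> max C0 D0 \<and> B1 \<le> max C1 D1 \<and> B2 \<le> max C2 D2)"
  using assms unfolding max_def min_def by smt

lemma crossing_endpoint_in_canonical_triangle:
  assumes "p \<in> closed_segment u v" "p \<in> closed_segment x y"
  shows "x \<in> canonical_triangle u v \<or> y \<in> canonical_triangle u v \<or>
    u \<in> canonical_triangle x y \<or> v \<in> canonical_triangle x y"
  using common_point_max_cases[OF cone_coord_closed_segment[OF assms(1), of 0]
      cone_coord_closed_segment[OF assms(1), of 2] cone_coord_closed_segment[OF assms(1), of 4]
      cone_coord_closed_segment[OF assms(2), of 0] cone_coord_closed_segment[OF assms(2), of 2]
      cone_coord_closed_segment[OF assms(2), of 4]]
  by (simp add: canonical_triangle_def)

section \<open>A crossed edge has a closer vertex in its subcone\<close>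

lemma exit_parameter:
  fixes a1 a2 a3 x1 x2 x3 :: real
  assumes a: "a1 > 0" "a2 > 0" "a3 > 0" and x3: "x3 > 0" and x12: "x1 < 0 \<or> x2 < 0"
  obtains l where "0 < l" "l < 1" "(1 - l) * a1 + l * x1 \<ge> 0" "(1 - l) * a2 + l * x2 \<ge> 0"
    "(1 - l) * a3 + l * x3 > 0" "(1 - l) * a1 + l * x1 = 0 \<or> (1 - l) * a2 + l * x2 = 0"
proof -
  define l1 where "l1 = (if x1 < 0 then a1 / (a1 - x1) else 1)"
  define l2 where "l2 = (if x2 < 0 then a2 / (a2 - x2) else 1)"
  have l1: "0 < l1" "l1 \<le> 1" "x1 < 0 \<Longrightarrow> l1 < 1" "x1 < 0 \<Longrightarrow> a1 - l1 * (a1 - x1) = 0"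
    unfolding l1_def using a by (auto simp: field_simps)
  have l2: "0 < l2" "l2 \<le> 1" "x2 < 0 \<Longrightarrow> l2 < 1" "x2 < 0 \<Longrightarrow> a2 - l2 * (a2 - x2) = 0"
    unfolding l2_def using a by (auto simp: field_simps)
  define l where "l = min l1 l2"
  have l: "0 < l" "l < 1" "l \<le> l1" "l \<le> l2" unfolding l_def using l1 l2 x12 by auto
  have nonneg: "(1 - l) * a + l * x \<ge> 0"
    if "a > 0" "x < 0 \<Longrightarrow> a - lj * (a - x) = 0" "l \<le> lj" for a x lj :: real
  proof (cases "x < 0")
    case True
    have "l * (a - x) \<le> lj * (a - x)" using True that(1,3) by (intro mult_right_mono) auto
    then show ?thesis using that(2)[OF True] by (simp add: algebra_simps)
  next
    case False
    then show ?thesis using that(1) l by (simp add: add_nonneg_nonneg)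
  qed
  have "(1 - l) * a1 + l * x1 = 0 \<or> (1 - l) * a2 + l * x2 = 0"
  proof (cases "l1 \<le> l2")
    case True
    then have "l = l1" "x1 < 0" using l(2) by (auto simp: l_def l1_def split: if_splits)
    then show ?thesis using l1(4) by (simp add: algebra_simps)
  next
    case False
    then have "l = l2" "x2 < 0" using l(2) by (auto simp: l_def l2_def split: if_splits)
    then show ?thesis using l2(4) by (simp add: algebra_simps)
  qed
  moreover have "(1 - l) * a3 + l * x3 > 0" using a(3) x3 l by (simp add: add_pos_pos)
  ultimately show ?thesis
    using that l nonneg[OF a(1) l1(4) l(3)] nonneg[OF a(2) l2(4) l(4)] by blast
qed

locale crossed_cone_segment =
  fixes V :: "pt set" and S :: "pt list set" and u v z z' p :: pt and k :: nat and \<sigma> \<mu> :: real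
  assumes setting: "obstacle_setting V S" and gp: "general_position V"
    and uV: "u \<in> V" and vV: "v \<in> V" and k: "k \<in> {0, 2, 4}" and v_cone: "in_cone k u v"
    and uv_visible: "visible S u v"
    and zV: "z \<in> V" and zu: "z \<noteq> u" and zv: "z \<noteq> v" and zz'_visible: "visible S z z'"
    and z_triangle: "z \<in> canonical_triangle u v"
    and \<sigma>: "0 < \<sigma>" "\<sigma> < 1" and p_uv: "p = (1 - \<sigma>) *\<^sub>R u + \<sigma> *\<^sub>R v"
    and \<mu>: "0 < \<mu>" "\<mu> < 1" and p_zz': "p = (1 - \<mu>) *\<^sub>R z + \<mu> *\<^sub>R z'"
begin

definition "D = cross (p - u) (z - u)"
definition \<alpha> :: "pt \<Rightarrow> real" where "\<alpha> x = cross (x - u) (z - u) / D"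
definition \<beta> :: "pt \<Rightarrow> real" where "\<beta> x = cross (p - u) (x - u) / D"

lemma u_ne_v: "u \<noteq> v"
  using v_cone by (auto simp: in_cone_def)

lemma p_minus_u: "p - u = \<sigma> *\<^sub>R (v - u)"
  by (simp add: p_uv algebra_simps)

lemma D_nonzero: "D \<noteq> 0"
  using general_position_cross[OF gp uV vV zV u_ne_v zv[symmetric] zu[symmetric]] \<sigma>
  by (simp add: D_def p_minus_u cross_scaleR)

lemma decomposition: "x = u + \<alpha> x *\<^sub>R (p - u) + \<beta> x *\<^sub>R (z - u)"
  using cross_cramer[OF D_nonzero[unfolded D_def], of "x - u"]
  by (simp add: \<alpha>_def \<beta>_def D_def algebra_simps)

lemma \<alpha>_affine: "\<alpha> ((1 - t) *\<^sub>R x + t *\<^sub>R y) = (1 - t) * \<alpha> x + t * \<alpha> y"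
  and \<beta>_affine: "\<beta> ((1 - t) *\<^sub>R x + t *\<^sub>R y) = (1 - t) * \<beta> x + t * \<beta> y"
  using D_nonzero by (simp_all add: \<alpha>_def \<beta>_def cross_def field_simps)

lemma \<alpha>_u: "\<alpha> u = 0" and \<beta>_u: "\<beta> u = 0"
  and \<alpha>_p: "\<alpha> p = 1" and \<beta>_p: "\<beta> p = 0"
  and \<alpha>_z: "\<alpha> z = 0" and \<beta>_z: "\<beta> z = 1"
  using D_nonzero by (simp_all add: \<alpha>_def \<beta>_def D_def cross_def)

lemma \<alpha>_v: "\<alpha> v = 1 / \<sigma>" and \<beta>_v: "\<beta> v = 0"
proof -
  have "v - u = (1 / \<sigma>) *\<^sub>R (p - u)" using \<sigma> by (simp add: p_minus_u)
  then show "\<alpha> v = 1 / \<sigma>" "\<beta> v = 0"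
    using D_nonzero by (simp_all add: \<alpha>_def \<beta>_def D_def cross_scaleR cross_self)
qed

definition "W = {x \<in> V. x \<noteq> u \<and> \<alpha> x \<ge> 0 \<and> \<beta> x \<ge> 0 \<and> \<alpha> x + \<beta> x \<le> 1}"
text \<open>On \<open>W\<close>, \<open>slope\<close> orders directions from \<open>u\<close> angularly, from ray \<open>u p\<close> (0)
  to ray \<open>u z\<close> (1).\<close>

definition slope :: "pt \<Rightarrow> real" where "slope x = \<beta> x / (\<alpha> x + \<beta> x)"
definition "w = arg_min_on slope W"
definition "\<phi> = slope w"
definition side_pz :: "pt \<Rightarrow> real" where "side_pz x = 1 - \<alpha> x - \<beta> x"
definition side_uw :: "pt \<Rightarrow> real" where "side_uw x = \<phi> * \<alpha> x - (1 - \<phi>) * \<beta> x"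

lemma side_pz_affine: "side_pz ((1 - t) *\<^sub>R x + t *\<^sub>R y) = (1 - t) * side_pz x + t * side_pz y"
  and side_uw_affine: "side_uw ((1 - t) *\<^sub>R x + t *\<^sub>R y) = (1 - t) * side_uw x + t * side_uw y"
  unfolding side_pz_def side_uw_def \<alpha>_affine \<beta>_affine by (simp_all add: algebra_simps)

lemma W_sum_pos:
  assumes "x \<in> W"
  shows "\<alpha> x + \<beta> x > 0"
proof (rule ccontr)
  assume "\<not> \<alpha> x + \<beta> x > 0"
  with assms have "\<alpha> x = 0" "\<beta> x = 0" by (auto simp: W_def)
  then have "x = u" using decomposition[of x] by simp
  with assms show False by (simp add: W_def)
qed

lemma w_in_W: "w \<in> W" and slope_w_le: "x \<in> W \<Longrightarrow> \<phi> \<le> slope x"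
proof -
  have "finite W" using setting by (simp add: W_def obstacle_setting_def)
  moreover have "z \<in> W" using zV zu by (simp add: W_def \<alpha>_z \<beta>_z)
  ultimately show "w \<in> W" "x \<in> W \<Longrightarrow> \<phi> \<le> slope x"
    unfolding w_def \<phi>_def by (auto intro: arg_min_if_finite arg_min_least)
qed

lemma w_in_upz:
  "w \<in> V" "w \<noteq> u" "\<alpha> w \<ge> 0" "\<beta> w \<ge> 0" "\<alpha> w + \<beta> w \<le> 1" "\<alpha> w + \<beta> w > 0"
  using w_in_W W_sum_pos by (auto simp: W_def)

lemma side_uw_w: "side_uw w = 0"
  using w_in_upz by (simp add: side_uw_def \<phi>_def slope_def field_simps)

lemma \<phi>_le_1: "\<phi> \<le> 1"
  using w_in_upz by (simp add: \<phi>_def slope_def)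

lemma \<phi>_pos: "\<phi> > 0"
proof (rule ccontr)
  assume "\<not> \<phi> > 0"
  moreover have "\<phi> \<ge> 0" using w_in_upz by (simp add: \<phi>_def slope_def)
  ultimately have "\<beta> w = 0" using w_in_upz by (auto simp: \<phi>_def slope_def zero_less_divide_iff)
  then have "w - u = (\<alpha> w * \<sigma>) *\<^sub>R (v - u)"
    using decomposition[of w] by (simp add: p_minus_u algebra_simps)
  then have "cross (v - u) (w - u) = 0" by (simp add: cross_scaleR cross_self)
  then have "w = v"
    using general_position_cross[OF gp uV vV w_in_upz(1) u_ne_v] w_in_upz(2) by metis
  then show False using w_in_upz(5) \<open>\<beta> w = 0\<close> \<alpha>_v \<sigma> by (simp add: field_simps)
qed

lemma \<beta>_w_pos: "\<beta> w > 0"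
  using \<phi>_pos w_in_upz side_uw_w by (simp add: side_uw_def \<phi>_def slope_def field_simps)

lemma vertex_in_closed_wedge:
  assumes "c \<in> V" "\<beta> c \<ge> 0" "side_pz c \<ge> 0" "side_uw c \<ge> 0"
  shows "side_uw c = 0"
proof (cases "c = u")
  case False
  have "(1 - \<phi>) * \<beta> c \<ge> 0" using \<phi>_le_1 assms(2) by simp
  with assms(4) \<phi>_pos have "\<alpha> c \<ge> 0"
    by (simp add: side_uw_def) (meson order_trans zero_le_mult_iff not_le)
  with assms False have "c \<in> W" by (simp add: W_def side_pz_def)
  then have "\<phi> * (\<alpha> c + \<beta> c) \<le> \<beta> c"
    using slope_w_le W_sum_pos by (simp add: slope_def field_simps)
  with assms(4) show ?thesis by (simp add: side_uw_def algebra_simps)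
qed (simp add: side_uw_def \<alpha>_u \<beta>_u)

lemma \<alpha>_combination: "\<alpha> (u + a *\<^sub>R (p - u) + b *\<^sub>R (z - u)) = a"
  and \<beta>_combination: "\<beta> (u + a *\<^sub>R (p - u) + b *\<^sub>R (z - u)) = b"
  using D_nonzero by (simp_all add: \<alpha>_def \<beta>_def D_def cross_def field_simps)

text \<open>The open triangle with corners \<open>u\<close>, \<open>p\<close> and the point where ray \<open>u w\<close> meets
  line \<open>p z\<close>.\<close>

definition "wedge = {x. \<beta> x > 0 \<and> side_pz x > 0 \<and> side_uw x > 0}"

lemma wedge_segment:
  assumes "\<beta> x \<ge> 0" "side_pz x \<ge> 0" "side_uw x \<ge> 0" "y \<in> wedge" "0 < t" "t \<le> 1"
  shows "(1 - t) *\<^sub>R x + t *\<^sub>R y \<in> wedge"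
proof -
  have "(1 - t) * f x + t * f y > 0" if "f x \<ge> 0" "f y > 0" for f :: "pt \<Rightarrow> real"
    using that assms(5,6) by (simp add: add_nonneg_pos)
  with assms show ?thesis by (simp add: wedge_def \<beta>_affine side_pz_affine side_uw_affine)
qed

lemma convex_wedge: "convex wedge"
  unfolding convex_alt
proof (intro ballI allI impI)
  fix x y and t :: real
  assume "x \<in> wedge" "y \<in> wedge" "0 \<le> t \<and> t \<le> 1"
  then show "(1 - t) *\<^sub>R x + t *\<^sub>R y \<in> wedge"
    using wedge_segment[of x y t] by (cases "t = 0") (auto simp: wedge_def)
qed

lemma centroid_in_wedge: "u + ((2 - \<phi>) / 3) *\<^sub>R (p - u) + (\<phi> / 3) *\<^sub>R (z - u) \<in> wedge"
  using \<phi>_pos \<phi>_le_1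
  unfolding wedge_def mem_Collect_eq side_pz_def side_uw_def \<alpha>_combination \<beta>_combination
  by (simp add: field_simps)

lemma closed_wedge_subset_closure:
  assumes "\<beta> x \<ge> 0" "side_pz x \<ge> 0" "side_uw x \<ge> 0"
  shows "x \<in> closure wedge"
proof -
  let ?c = "u + ((2 - \<phi>) / 3) *\<^sub>R (p - u) + (\<phi> / 3) *\<^sub>R (z - u)"
  have "open_segment x ?c \<subseteq> wedge"
    using wedge_segment[OF assms centroid_in_wedge] by (auto simp: in_segment(2))
  then have "closure (open_segment x ?c) \<subseteq> closure wedge" by (rule closure_mono)
  then show ?thesis
    using centroid_in_wedge closure_subset by (cases "x = ?c") auto
qed

lemma z_ne_z': "z \<noteq> z'"
proof
  assume "z = z'"
  then have "p = z" using p_zz' by (simp add: algebra_simps)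
  then show False using \<beta>_p \<beta>_z by simp
qed

lemma p_in_open_segment_uv: "p \<in> open_segment u v"
  using u_ne_v \<sigma> p_uv by (auto simp: in_segment(2))

lemma p_in_open_segment_zz': "p \<in> open_segment z z'"
  using z_ne_z' \<mu> p_zz' by (auto simp: in_segment(2))

lemma p_notin_V: "p \<notin> V"
proof
  assume "p \<in> V"
  have "cross (v - u) (p - u) = 0" by (simp add: p_minus_u cross_scaleR cross_self)
  moreover have "p \<noteq> u" "p \<noteq> v" using \<alpha>_p \<alpha>_u \<alpha>_v \<sigma> by auto
  ultimately show False using general_position_cross[OF gp uV vV \<open>p \<in> V\<close> u_ne_v] by auto
qed

lemma z_minus_p: "z - p = \<mu> *\<^sub>R (z - z')"
  by (simp add: p_zz' algebra_simps)

lemma uv_zz'_transversal: "cross (v - u) (z' - z) \<noteq> 0"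
proof -
  have "D = cross (p - u) (z - p)" by (simp add: D_def cross_def algebra_simps)
  also have "\<dots> = - (\<sigma> * \<mu>) * cross (v - u) (z' - z)"
    unfolding p_minus_u z_minus_p by (simp add: cross_def algebra_simps)
  finally show ?thesis using D_nonzero by auto
qed

lemma \<beta>_eq_if_parallel_uv:
  assumes "cross (x - y) (v - u) = 0"
  shows "\<beta> x = \<beta> y"
proof -
  have "\<beta> x - \<beta> y = cross (p - u) (x - y) / D"
    by (simp add: \<beta>_def cross_def diff_divide_distrib[symmetric] algebra_simps)
  also have "\<dots> = - \<sigma> * cross (x - y) (v - u) / D"
    unfolding p_minus_u by (simp add: cross_def algebra_simps)
  finally show ?thesis using assms by simp
qed

lemma side_pz_eq_if_parallel_zz':
  assumes "cross (x - y) (z' - z) = 0"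
  shows "side_pz x = side_pz y"
proof -
  have "side_pz x - side_pz y = - cross (x - y) (z - p) / D"
    by (simp add: side_pz_def \<alpha>_def \<beta>_def cross_def diff_divide_distrib[symmetric]
        add_divide_distrib[symmetric] algebra_simps)
  also have "\<dots> = \<mu> * cross (x - y) (z' - z) / D"
    unfolding z_minus_p by (simp add: cross_def algebra_simps)
  finally show ?thesis using assms by simp
qed

lemma obstacle: "Ob \<in> S \<Longrightarrow> simple_polygon Ob \<and> set Ob \<subseteq> V"
  using setting by (simp add: obstacle_setting_def)

lemma p_notin_poly_boundary:
  assumes Ob: "Ob \<in> S"
  shows "p \<notin> poly_boundary Ob"
proof
  assume "p \<in> poly_boundary Ob"
  then obtain i where i: "i < length Ob" "p \<in> poly_edge Ob i" by (auto simp: poly_boundary_def)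
  let ?d = "Ob ! (Suc i mod length Ob) - Ob ! i"
  have "p \<notin> set Ob" using p_notin_V obstacle[OF Ob] by blast
  then have "cross ?d (v - u) = 0" "cross ?d (z' - z) = 0"
    using visible_crossing_poly_edge_parallel[OF _ Ob _ i] obstacle[OF Ob] uv_visible zz'_visible
      p_in_open_segment_uv p_in_open_segment_zz' by blast+
  moreover have "?d \<noteq> 0" using poly_edge_nondegenerate[OF _ i(1)] obstacle[OF Ob] by simp
  ultimately show False using cross_parallel_trans uv_zz'_transversal by blast
qed

lemma \<alpha>_pos_if_side_uw_pos:
  assumes "\<beta> x \<ge> 0" "side_uw x > 0"
  shows "\<alpha> x > 0"
proof -
  have "(1 - \<phi>) * \<beta> x \<ge> 0" using assms(1) \<phi>_le_1 by simp
  with assms(2) have "\<phi> * \<alpha> x > 0" by (simp add: side_uw_def)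
  with \<phi>_pos show ?thesis by (simp add: zero_less_mult_iff)
qed

lemma wedge_exit_in_open_segments:
  assumes "\<beta> e \<ge> 0" "side_pz e \<ge> 0" "side_uw e > 0"
  shows "\<beta> e = 0 \<Longrightarrow> e \<in> open_segment u v"
    and "side_pz e = 0 \<Longrightarrow> e \<in> open_segment z z'"
proof -
  have \<alpha>: "\<alpha> e > 0" using assms(1,3) by (rule \<alpha>_pos_if_side_uw_pos)
  show "e \<in> open_segment u v" if "\<beta> e = 0"
  proof -
    have "e = (1 - \<alpha> e * \<sigma>) *\<^sub>R u + (\<alpha> e * \<sigma>) *\<^sub>R v"
      using decomposition[of e] that by (simp add: p_minus_u algebra_simps)
    moreover have "\<alpha> e * \<sigma> \<le> 1 * \<sigma>"
      using assms(2) that \<sigma> by (intro mult_right_mono) (simp_all add: side_pz_def)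
    then have "\<alpha> e * \<sigma> < 1" using \<sigma> by linarith
    ultimately show ?thesis
      using u_ne_v \<sigma> \<alpha> unfolding in_segment(2) by (intro conjI exI[of _ "\<alpha> e * \<sigma>"]) auto
  qed
  show "e \<in> open_segment z z'" if "side_pz e = 0"
  proof -
    have "\<alpha> e = 1 - \<beta> e" using that by (simp add: side_pz_def)
    then have "e = (1 - \<beta> e) *\<^sub>R p + \<beta> e *\<^sub>R z"
      using decomposition[of e, unfolded \<open>\<alpha> e = 1 - \<beta> e\<close>] by (simp add: algebra_simps)
    then have "e = (1 - (1 - \<beta> e) * \<mu>) *\<^sub>R z + ((1 - \<beta> e) * \<mu>) *\<^sub>R z'"
      unfolding p_zz' by (simp add: algebra_simps)
    moreover have "0 < (1 - \<beta> e) * \<mu>" using \<open>\<alpha> e = 1 - \<beta> e\<close> \<alpha> \<mu> by simp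
    moreover have "(1 - \<beta> e) * \<mu> \<le> 1 * \<mu>"
      using assms(1) \<mu> by (intro mult_right_mono) simp_all
    then have "(1 - \<beta> e) * \<mu> < 1" using \<mu> by linarith
    ultimately show ?thesis
      using z_ne_z' unfolding in_segment(2) by (intro conjI exI[of _ "(1 - \<beta> e) * \<mu>"]) auto
  qed
qed

lemma edge_endpoint_beyond_wedge:
  assumes Ob: "Ob \<in> S" and i: "i < length Ob" and b: "b \<in> wedge" "b \<in> poly_edge Ob i"
  obtains c where "c \<in> {Ob ! i, Ob ! (Suc i mod length Ob)}" "side_uw c > 0" "\<beta> c < 0 \<or> side_pz c < 0"
proof -
  let ?c1 = "Ob ! i" and ?c2 = "Ob ! (Suc i mod length Ob)"
  obtain \<tau> where \<tau>: "0 \<le> \<tau>" "\<tau> \<le> 1" "b = (1 - \<tau>) *\<^sub>R ?c1 + \<tau> *\<^sub>R ?c2"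
    using b(2) unfolding poly_edge_def in_segment(1) by blast
  have "side_uw ?c1 > 0 \<or> side_uw ?c2 > 0"
  proof (rule ccontr)
    assume "\<not> (side_uw ?c1 > 0 \<or> side_uw ?c2 > 0)"
    then have "(1 - \<tau>) * side_uw ?c1 \<le> 0" "\<tau> * side_uw ?c2 \<le> 0"
      using \<tau>(1,2) by (simp_all add: mult_nonneg_nonpos)
    moreover have "side_uw b = (1 - \<tau>) * side_uw ?c1 + \<tau> * side_uw ?c2"
      using \<tau>(3) side_uw_affine by simp
    ultimately show False using b(1) by (simp add: wedge_def)
  qed
  then obtain c where c: "c \<in> {?c1, ?c2}" "side_uw c > 0" by blast
  moreover have "c \<in> V" using c(1) obstacle[OF Ob] poly_edge_ends_in_set[OF i] by blast
  then have "\<beta> c < 0 \<or> side_pz c < 0" using vertex_in_closed_wedge c(2) by fastforce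
  ultimately show ?thesis using that by blast
qed

lemma wedge_edge_exit:
  assumes Ob: "Ob \<in> S" and i: "i < length Ob" and b: "b \<in> wedge" "b \<in> poly_edge Ob i"
  obtains e where "e \<in> poly_edge Ob i" "e \<notin> set Ob"
    "\<beta> e \<ge> 0" "side_pz e \<ge> 0" "side_uw e > 0" "\<beta> e = 0 \<or> side_pz e = 0"
proof -
  obtain c where c: "c \<in> {Ob ! i, Ob ! (Suc i mod length Ob)}" "side_uw c > 0" "\<beta> c < 0 \<or> side_pz c < 0"
    using edge_endpoint_beyond_wedge[OF assms] .
  with b(1) obtain l where l: "0 < l" "l < 1"
    "(1 - l) * \<beta> b + l * \<beta> c \<ge> 0" "(1 - l) * side_pz b + l * side_pz c \<ge> 0"
    "(1 - l) * side_uw b + l * side_uw c > 0"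
    "(1 - l) * \<beta> b + l * \<beta> c = 0 \<or> (1 - l) * side_pz b + l * side_pz c = 0"
    using exit_parameter[of "\<beta> b" "side_pz b" "side_uw b" "side_uw c" "\<beta> c" "side_pz c"]
    by (auto simp: wedge_def)
  define e where "e = (1 - l) *\<^sub>R b + l *\<^sub>R c"
  have e: "\<beta> e \<ge> 0" "side_pz e \<ge> 0" "side_uw e > 0" "\<beta> e = 0 \<or> side_pz e = 0"
    using l by (simp_all add: e_def \<beta>_affine side_pz_affine side_uw_affine)
  then have "e \<notin> V" using vertex_in_closed_wedge by fastforce
  then have "e \<notin> set Ob" using obstacle[OF Ob] by blast
  have "c \<in> poly_edge Ob i" using c(1) by (auto simp: poly_edge_def)
  then have "e \<in> poly_edge Ob i"
    using convexD[of "poly_edge Ob i" b c "1 - l" l] b(2) l(1,2)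
    by (simp add: e_def poly_edge_def convex_closed_segment)
  with \<open>e \<notin> set Ob\<close> e show ?thesis using that by blast
qed

lemma wedge_disjoint_poly_boundary:
  assumes Ob: "Ob \<in> S"
  shows "wedge \<inter> poly_boundary Ob = {}"
proof (rule ccontr)
  assume "wedge \<inter> poly_boundary Ob \<noteq> {}"
  then obtain b i where b: "b \<in> wedge" "b \<in> poly_edge Ob i" and i: "i < length Ob"
    by (auto simp: poly_boundary_def)
  obtain e where e_edge: "e \<in> poly_edge Ob i" and "e \<notin> set Ob"
    and e: "\<beta> e \<ge> 0" "side_pz e \<ge> 0" "side_uw e > 0" "\<beta> e = 0 \<or> side_pz e = 0"
    using wedge_edge_exit[OF Ob i b] .
  let ?d = "Ob ! (Suc i mod length Ob) - Ob ! i"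
  obtain s where b_minus_e: "b - e = s *\<^sub>R ?d"
    using closed_segment_diff_parallel b(2) e_edge by (metis poly_edge_def)
  have P: "simple_polygon Ob" using obstacle[OF Ob] by blast
  from e(4) show False
  proof
    assume "\<beta> e = 0"
    then have "e \<in> open_segment u v" using wedge_exit_in_open_segments(1)[OF e(1-3)] by blast
    then have "cross ?d (v - u) = 0"
      using visible_crossing_poly_edge_parallel[OF uv_visible Ob P i e_edge \<open>e \<notin> set Ob\<close>] by blast
    then have "\<beta> b = \<beta> e" using \<beta>_eq_if_parallel_uv by (simp add: b_minus_e cross_scaleR)
    with b(1) \<open>\<beta> e = 0\<close> show False by (simp add: wedge_def)
  next
    assume "side_pz e = 0"
    then have "e \<in> open_segment z z'" using wedge_exit_in_open_segments(2)[OF e(1-3)] by blast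
    then have "cross ?d (z' - z) = 0"
      using visible_crossing_poly_edge_parallel[OF zz'_visible Ob P i e_edge \<open>e \<notin> set Ob\<close>] by blast
    then have "side_pz b = side_pz e" using side_pz_eq_if_parallel_zz' by (simp add: b_minus_e cross_scaleR)
    with b(1) \<open>side_pz e = 0\<close> show False by (simp add: wedge_def)
  qed
qed

lemma wedge_disjoint_poly_interior:
  assumes Ob: "Ob \<in> S"
  shows "wedge \<inter> poly_interior Ob = {}"
proof (rule ccontr)
  assume "wedge \<inter> poly_interior Ob \<noteq> {}"
  then obtain x where x: "x \<in> wedge" "x \<in> poly_interior Ob" by blast
  have "wedge \<subseteq> poly_interior Ob"
    using connected_subset_inside[OF convex_connected[OF convex_wedge] wedge_disjoint_poly_boundary[OF Ob]]
      x unfolding poly_interior_def by blast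
  moreover have "p \<in> closure wedge"
    using \<phi>_pos by (intro closed_wedge_subset_closure) (simp_all add: \<beta>_p side_pz_def side_uw_def \<alpha>_p)
  ultimately have "p \<in> closure (poly_interior Ob)" using closure_mono by blast
  then have "p \<in> poly_boundary Ob \<union> poly_interior Ob"
    using closure_inside_subset[OF closed_poly_boundary] unfolding poly_interior_def by blast
  moreover have "p \<in> closed_segment u v" using p_in_open_segment_uv open_closed_segment by blast
  then have "p \<notin> poly_interior Ob" using uv_visible Ob unfolding visible_def by blast
  ultimately show False using p_notin_poly_boundary[OF Ob] by blast
qed

lemma closed_wedge_disjoint_poly_interior:
  assumes "Ob \<in> S" "\<beta> x \<ge> 0" "side_pz x \<ge> 0" "side_uw x \<ge> 0"
  shows "x \<notin> poly_interior Ob"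
  using open_Int_closure_eq_empty[OF open_poly_interior, of Ob wedge]
    wedge_disjoint_poly_interior[OF assms(1)] closed_wedge_subset_closure[OF assms(2-4)]
  by blast

lemma u_sees_w: "visible S u w"
  unfolding visible_def
proof (intro ballI equalityI subsetI)
  fix Ob x assume Ob: "Ob \<in> S" and "x \<in> closed_segment u w \<inter> poly_interior Ob"
  then obtain t where t: "0 \<le> t" "t \<le> 1" "x = (1 - t) *\<^sub>R u + t *\<^sub>R w" and "x \<in> poly_interior Ob"
    by (auto simp: in_segment(1))
  have "side_pz u = 1" "side_uw u = 0" "side_pz w \<ge> 0"
    using w_in_upz by (simp_all add: side_pz_def side_uw_def \<alpha>_u \<beta>_u)
  then have "\<beta> x \<ge> 0" "side_pz x \<ge> 0" "side_uw x \<ge> 0"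
    using t w_in_upz side_uw_w by (simp_all add: \<beta>_affine side_pz_affine side_uw_affine \<beta>_u)
  with Ob \<open>x \<in> poly_interior Ob\<close> show "x \<in> {}"
    using closed_wedge_disjoint_poly_interior by blast
qed simp

lemma \<alpha>_ray:
    "\<alpha> (u + t *\<^sub>R ((1 - s) *\<^sub>R (a - u) + s *\<^sub>R (b - u))) = t * ((1 - s) * \<alpha> a + s * \<alpha> b)"
  and \<beta>_ray:
    "\<beta> (u + t *\<^sub>R ((1 - s) *\<^sub>R (a - u) + s *\<^sub>R (b - u))) = t * ((1 - s) * \<beta> a + s * \<beta> b)"
  using D_nonzero by (simp_all add: \<alpha>_def \<beta>_def cross_def field_simps)

lemma ray_between_v_w_in_wedge:
  assumes "d \<in> open_segment (v - u) (w - u)"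
  obtains \<epsilon> where "\<epsilon> > 0" "\<And>t. 0 < t \<Longrightarrow> t < \<epsilon> \<Longrightarrow> u + t *\<^sub>R d \<in> wedge"
proof -
  obtain s where s: "0 < s" "s < 1" "d = (1 - s) *\<^sub>R (v - u) + s *\<^sub>R (w - u)"
    using assms by (auto simp: in_segment(2))
  define K where "K = (1 - s) / \<sigma> + s * (\<alpha> w + \<beta> w)"
  have "K > 0" using s \<sigma> w_in_upz by (simp add: K_def add_pos_nonneg)
  have "u + t *\<^sub>R d \<in> wedge" if "0 < t" "t < 1 / K" for t
  proof -
    let ?x = "u + t *\<^sub>R d"
    have "\<beta> ?x = t * s * \<beta> w" "side_pz ?x = 1 - t * K"
      "side_uw ?x = t * (1 - s) * \<phi> / \<sigma> + t * s * side_uw w"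
      unfolding s(3) side_pz_def side_uw_def \<alpha>_ray \<beta>_ray \<alpha>_v \<beta>_v K_def
      by (simp_all add: algebra_simps)
    moreover have "t * K < 1" using that \<open>K > 0\<close> by (simp add: field_simps)
    ultimately show ?thesis using that s \<sigma> \<phi>_pos \<beta>_w_pos side_uw_w by (simp add: wedge_def)
  qed
  with \<open>K > 0\<close> show ?thesis using that[of "1 / K"] by simp
qed

lemma v_w_same_subcone: "same_subcone S u v w"
  unfolding same_subcone_def
proof (intro ballI impI notI)
  fix Ob d assume Ob: "Ob \<in> S" and d: "d \<in> open_segment (v - u) (w - u)" and "enters_obstacle Ob u d"
  then obtain \<epsilon>1 where
    "\<epsilon>1 > 0" "\<And>t. 0 < t \<Longrightarrow> t < \<epsilon>1 \<Longrightarrow> u + t *\<^sub>R d \<in> poly_interior Ob"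
    by (auto simp: enters_obstacle_def)
  moreover obtain \<epsilon>2 where
    "\<epsilon>2 > 0" "\<And>t. 0 < t \<Longrightarrow> t < \<epsilon>2 \<Longrightarrow> u + t *\<^sub>R d \<in> wedge"
    using ray_between_v_w_in_wedge[OF d] by blast
  ultimately have "u + (min \<epsilon>1 \<epsilon>2 / 2) *\<^sub>R d \<in> wedge \<inter> poly_interior Ob" by simp
  with wedge_disjoint_poly_interior[OF Ob] show False by blast
qed

lemma w_in_canonical_triangle: "w \<in> canonical_triangle u v"
proof -
  have "p \<in> canonical_triangle u v"
    using p_in_open_segment_uv open_closed_segment convex_canonical_triangle
      left_in_canonical_triangle right_in_canonical_triangle
    by (metis closed_segment_subset subsetD)
  then have "convex hull {u, p, z} \<subseteq> canonical_triangle u v"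
    using z_triangle left_in_canonical_triangle convex_canonical_triangle by (intro hull_minimal) auto
  moreover have "w = (1 - \<alpha> w - \<beta> w) *\<^sub>R u + \<alpha> w *\<^sub>R p + \<beta> w *\<^sub>R z"
    using decomposition[of w] by (simp add: algebra_simps)
  then have "w \<in> convex hull {u, p, z}"
    using w_in_upz unfolding convex_hull_3 by fastforce
  ultimately show ?thesis by blast
qed

lemma w_closer: "in_cone k u w" "proj k u w < proj k u v"
proof -
  show "in_cone k u w"
    using in_cone_of_canonical_triangle(1)[OF k v_cone w_in_canonical_triangle w_in_upz(2)] .
  have "w \<noteq> v" using \<beta>_w_pos \<beta>_v by auto
  then have "proj k u w \<noteq> proj k u v"
    using general_position_cone_coord[OF gp vV w_in_upz(1) _ k]
    by (simp add: proj_eq_cone_coord cone_coord_diff)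
  then show "proj k u w < proj k u v"
    using in_cone_of_canonical_triangle(2)[OF k v_cone w_in_canonical_triangle w_in_upz(2)] by simp
qed

theorem closer_vertex_in_subcone:
  "\<exists>w\<in>V. in_cone k u w \<and> visible S u w \<and> same_subcone S u v w \<and> proj k u w < proj k u v"
  using w_in_upz(1) w_closer u_sees_w v_w_same_subcone by blast

end

lemma Ginf_edge_not_crossed_from_canonical_triangle:
  assumes setting: "obstacle_setting V S" and gp: "general_position V" and uv: "Ginf_edge V S u v"
    and z: "z \<in> V" "z \<noteq> u" "z \<noteq> v" "z \<in> canonical_triangle u v" and zz': "visible S z z'"
  shows "open_segment u v \<inter> open_segment z z' = {}"
proof (rule ccontr)
  assume "open_segment u v \<inter> open_segment z z' \<noteq> {}"
  then obtain p \<sigma> \<mu> where \<sigma>: "0 < \<sigma>" "\<sigma> < 1" "p = (1 - \<sigma>) *\<^sub>R u + \<sigma> *\<^sub>R v"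
    and \<mu>: "0 < \<mu>" "\<mu> < 1" "p = (1 - \<mu>) *\<^sub>R z + \<mu> *\<^sub>R z'"
    by (auto simp: in_segment(2))
  obtain k where k: "k < 6" "even k" "in_cone k u v" "visible S u v"
    and closest: "\<forall>w\<in>V. in_cone k u w \<and> visible S u w \<and> same_subcone S u v w \<longrightarrow>
      proj k u v \<le> proj k u w"
    and "u \<in> V" "v \<in> V"
    using uv unfolding Ginf_edge_def by blast
  have "k \<in> {0, 2, 4}" using k(1,2) by (auto simp: less_Suc_eq)
  then interpret crossed_cone_segment V S u v z z' p k \<sigma> \<mu>
    using setting gp \<open>u \<in> V\<close> \<open>v \<in> V\<close> k(3,4) z zz' \<sigma> \<mu> by unfold_locales
  show False using closer_vertex_in_subcone closest by fastforce
qed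

lemma open_segments_from_common_vertex_disjoint:
  assumes "general_position V" "a \<in> V" "b \<in> V" "c \<in> V" "a \<noteq> b" "b \<noteq> c" "a \<noteq> c"
  shows "open_segment a b \<inter> open_segment a c = {}"
proof (rule ccontr)
  assume "open_segment a b \<inter> open_segment a c \<noteq> {}"
  then obtain x where x: "x \<in> open_segment a b" "x \<in> open_segment a c" by blast
  obtain s where "x = (1 - s) *\<^sub>R a + s *\<^sub>R b" using x(1) in_segment(2) by blast
  moreover obtain t where "0 < t" "x = (1 - t) *\<^sub>R a + t *\<^sub>R c" using x(2) in_segment(2) by blast
  ultimately have "t *\<^sub>R (c - a) = s *\<^sub>R (b - a)" by (simp add: algebra_simps)
  then have "t * cross (b - a) (c - a) = s * cross (b - a) (b - a)" by (metis cross_scaleR(2))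
  then have "cross (b - a) (c - a) = 0" using \<open>0 < t\<close> by (simp add: cross_self)
  with general_position_cross[OF assms] show False by simp
qed

lemma crossing_segments_distinct_ends:
  assumes gp: "general_position V" and V: "a \<in> V" "b \<in> V" "d \<in> V"
    and "c \<noteq> d" "{a, b} \<noteq> {c, d}" and cross: "open_segment a b \<inter> open_segment c d \<noteq> {}"
  shows "c \<noteq> a" "c \<noteq> b"
proof -
  have "a \<noteq> b" using cross by auto
  show "c \<noteq> a"
  proof
    assume "c = a"
    with assms have "b \<noteq> d" "a \<noteq> d" by blast+
    with open_segments_from_common_vertex_disjoint[OF gp V \<open>a \<noteq> b\<close>] cross \<open>c = a\<close>
    show False by blast
  qed
  show "c \<noteq> b"
  proof
    assume "c = b"
    with assms have "a \<noteq> d" "b \<noteq> d" by (metis insert_commute)+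
    with open_segments_from_common_vertex_disjoint[OF gp V(2,1,3)] \<open>a \<noteq> b\<close> cross \<open>c = b\<close>
    show False by (simp add: open_segment_commute)
  qed
qed

lemma Ginf_edges_noncrossing:
  assumes setting: "obstacle_setting V S" and gp: "general_position V"
    and uv: "Ginf_edge V S u v" and xy: "Ginf_edge V S x y" and "{u, v} \<noteq> {x, y}"
  shows "open_segment u v \<inter> open_segment x y = {}"
proof (rule ccontr)
  assume cross: "open_segment u v \<inter> open_segment x y \<noteq> {}"
  have V: "u \<in> V" "v \<in> V" "x \<in> V" "y \<in> V" and vis: "visible S u v" "visible S x y"
    using uv xy by (auto simp: Ginf_edge_def)
  have "x \<noteq> y" using cross by auto
  have "x \<noteq> u" "x \<noteq> v"
    using crossing_segments_distinct_ends[OF gp V(1,2,4) \<open>x \<noteq> y\<close> assms(5) cross] by simp_all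
  moreover have "y \<noteq> u" "y \<noteq> v"
    using crossing_segments_distinct_ends[OF gp V(1,2,3), of y] \<open>x \<noteq> y\<close> assms(5) cross
    by (simp_all add: insert_commute open_segment_commute)
  moreover obtain q where "q \<in> closed_segment u v" "q \<in> closed_segment x y"
    using cross open_closed_segment by blast
  then consider "x \<in> canonical_triangle u v" | "y \<in> canonical_triangle u v"
    | "u \<in> canonical_triangle x y" | "v \<in> canonical_triangle x y"
    using crossing_endpoint_in_canonical_triangle by blast
  then show False
  proof cases
    case 1
    with Ginf_edge_not_crossed_from_canonical_triangle[OF setting gp uv V(3)] calculation vis(2) cross
    show False by simp
  next
    case 2
    with Ginf_edge_not_crossed_from_canonical_triangle[OF setting gp uv V(4)] calculation vis(2) cross
    show False by (simp add: open_segment_commute visible_commute)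
  next
    case 3
    with Ginf_edge_not_crossed_from_canonical_triangle[OF setting gp xy V(1)] calculation vis(1) cross
    show False by (simp add: Int_commute)
  next
    case 4
    with Ginf_edge_not_crossed_from_canonical_triangle[OF setting gp xy V(2)] calculation vis(1) cross
    show False by (simp add: Int_commute open_segment_commute visible_commute)
  qed
qed

lemma open_segment_doubleton: "{a, b} = {c, d} \<Longrightarrow> open_segment a b = open_segment c d"
  by (metis doubleton_eq_iff open_segment_commute)

lemma plane_subset: "E \<subseteq> F \<Longrightarrow> plane F \<Longrightarrow> plane E"
  unfolding plane_def by blast

lemma Ginf_plane:
  assumes "obstacle_setting V S" "general_position V"
  shows "plane (Ginf V S)"
  unfolding plane_def
proof (intro allI impI)
  fix a b c d assume edges: "{a, b} \<in> Ginf V S \<and> {c, d} \<in> Ginf V S \<and> {a, b} \<noteq> {c, d}"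
  then obtain u v x y where "{a, b} = {u, v}" "Ginf_edge V S u v" "{c, d} = {x, y}" "Ginf_edge V S x y"
    unfolding Ginf_def by blast
  with edges Ginf_edges_noncrossing[OF assms] show "open_segment a b \<inter> open_segment c d = {}"
    by (metis open_segment_doubleton)
qed

lemma G15_subset_Ginf: "G15 V S \<subseteq> Ginf V S"
  by (auto simp: G15_def)

theorem lemma6:
  fixes V :: "pt set" and S :: "pt list set"
  assumes "obstacle_setting V S"
    and "general_position V"
  shows "plane (G15 V S)"
  using plane_subset[OF G15_subset_Ginf Ginf_plane[OF assms]] .

end
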